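(* Let $B_n=\{z\in\mathbb C^n:\|z\|^2<1\}$ be the unit ball. If $F$ is a strongly pseudoconvex complex Finsler metric on $B_n$ that is $\mathrm{Aut}(B_n)$-invariant, then there is a constant $c>0$ such that $$F^2(z,v)=c\,\frac{(1-\|z\|^2)\|v\|^2+|\langle z,v\rangle|^2}{(1-\|z\|^2)^2}\quad\text{for all }z\in B_n,\ v\in T^{1,0}_zB_n\cong\mathbb C^n,$$ i.e. $F$ is a constant multiple of the Poincaré–Bergman metric.
   Context: $\mathrm{Aut}(B_n)$ is the group of holomorphic automorphisms of $B_n$; $F$ is $\mathrm{Aut}(B_n)$-invariant if $F(f(z),f_\ast v)=F(z,v)$ for all $f\in\mathrm{Aut}(B_n)$ and $(z,v)\in T^{1,0}B_n$. A strongly pseudoconvex complex Finsler metric on a complex manifold $M$ is a continuous $F:T^{1,0}M\to[0,\infty)$ with $F(z,v)=0$ iff $v=0$, $G=F^2$ smooth off the zero section, $G(z,\lambda v)=|\lambda|^2G(z,v)$ for all $\lambda\in\mathbb C$, and $(\partial^2G/\partial v^\alpha\partial\bar v^\beta)$ positive definite off the zero section. $\langle z,v\rangle=\sum_i z^i\overline{v^i}$. *)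

theory Defs
  imports "HOL-Analysis.Analysis"
begin

text \<open>The unit ball B_n in C^n, with C^n modelled as complex^'n (n = CARD('n)).\<close>
definition unit_ball :: "(complex ^ 'n) set" where
  "unit_ball = {z. (norm z)^2 < 1}"

definition herm :: "complex ^ 'n \<Rightarrow> complex ^ 'n \<Rightarrow> complex" where
  "herm z v = (\<Sum>i\<in>UNIV. z $ i * cnj (v $ i))"

definition holo_on :: "(complex ^ 'n \<Rightarrow> complex ^ 'm) \<Rightarrow> (complex ^ 'n) set \<Rightarrow> bool" where
  "holo_on f U \<longleftrightarrow> (\<forall>z\<in>U. \<exists>L. (f has_derivative L) (at z) \<and> (\<forall>c v. L (c *s v) = c *s L v))"

definition aut_ball :: "(complex ^ 'n \<Rightarrow> complex ^ 'n) set" where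
  "aut_ball = {f. bij_betw f unit_ball unit_ball \<and> holo_on f unit_ball
                  \<and> holo_on (inv_into unit_ball f) unit_ball}"

fun iter_dd :: "'a::real_normed_vector list \<Rightarrow> ('a \<Rightarrow> real) \<Rightarrow> 'a \<Rightarrow> real" where
  "iter_dd [] g = g"
| "iter_dd (u # us) g = (\<lambda>x. deriv (\<lambda>t. iter_dd us g (x + t *\<^sub>R u)) 0)"

definition smooth_on :: "'a::real_normed_vector set \<Rightarrow> ('a \<Rightarrow> real) \<Rightarrow> bool" where
  "smooth_on S g \<longleftrightarrow> (\<forall>us. continuous_on S (iter_dd us g) \<and>
      (\<forall>x\<in>S. \<forall>u. (\<lambda>t. iter_dd us g (x + t *\<^sub>R u)) differentiable (at 0)))"

text \<open>Entry (a,b) of the complex Hessian  d^2 G / dv^a d(conj v^b)  of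
  G :: (z,v) \<mapsto> real at the point p, via Wirtinger derivatives
  d/dv^a = (d/dx_a - i d/dy_a)/2,  d/d(conj v^b) = (d/dx_b + i d/dy_b)/2, with v_a = x_a + i y_a.\<close>
definition levi_entry :: "((complex^'n) \<times> (complex^'n) \<Rightarrow> real) \<Rightarrow> (complex^'n) \<times> (complex^'n) \<Rightarrow> 'n \<Rightarrow> 'n \<Rightarrow> complex" where
  "levi_entry G p a b =
     (let xa = (0, axis a 1); ya = (0, axis a \<i>); xb = (0, axis b 1); yb = (0, axis b \<i>) in
      (complex_of_real (iter_dd [xa, xb] G p + iter_dd [ya, yb] G p)
       + \<i> * complex_of_real (iter_dd [xa, yb] G p - iter_dd [ya, xb] G p)) / 4)"

definition pos_def_herm :: "('n::finite \<Rightarrow> 'n \<Rightarrow> complex) \<Rightarrow> bool" where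
  "pos_def_herm H \<longleftrightarrow> (\<forall>a b. H a b = cnj (H b a)) \<and>
     (\<forall>\<xi>::complex^'n. \<xi> \<noteq> 0 \<longrightarrow> 0 < Re (\<Sum>a\<in>UNIV. \<Sum>b\<in>UNIV. H a b * \<xi> $ a * cnj (\<xi> $ b)))"

text \<open>Strongly pseudoconvex complex Finsler metric on B_n; F z v is F at (z,v), v \<in> T^{1,0}_z B_n = C^n.\<close>
definition spc_finsler :: "(complex^'n \<Rightarrow> complex^'n \<Rightarrow> real) \<Rightarrow> bool" where
  "spc_finsler F \<longleftrightarrow>
     continuous_on (unit_ball \<times> UNIV) (\<lambda>p. F (fst p) (snd p))
   \<and> (\<forall>z\<in>unit_ball. \<forall>v. F z v \<ge> 0)
   \<and> (\<forall>z\<in>unit_ball. \<forall>v. F z v = 0 \<longleftrightarrow> v = 0)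
   \<and> smooth_on {p. fst p \<in> unit_ball \<and> snd p \<noteq> 0} (\<lambda>p. (F (fst p) (snd p))^2)
   \<and> (\<forall>z\<in>unit_ball. \<forall>v. \<forall>c::complex. (F z (c *s v))^2 = (cmod c)^2 * (F z v)^2)
   \<and> (\<forall>z\<in>unit_ball. \<forall>v. v \<noteq> 0 \<longrightarrow>
        pos_def_herm (levi_entry (\<lambda>p. (F (fst p) (snd p))^2) (z, v)))"

definition aut_invariant :: "(complex^'n \<Rightarrow> complex^'n \<Rightarrow> real) \<Rightarrow> bool" where
  "aut_invariant F \<longleftrightarrow>
     (\<forall>f\<in>aut_ball. \<forall>z\<in>unit_ball. \<forall>v. F (f z) (frechet_derivative f (at z) v) = F z v)"

end

theory Submission
  imports Defs
begin

text \<open>Aut(B_n) acts transitively on the ball: the Moebius involution \<open>\<phi>\<^sub>a\<close> swaps \<open>a\<close> and \<open>0\<close>,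
  and its differential at \<open>a\<close> sends \<open>v\<close> to a vector of squared norm
  \<open>((1 - |a|\<^sup>2)|v|\<^sup>2 + |\<langle>a,v\<rangle>|\<^sup>2) / (1 - |a|\<^sup>2)\<^sup>2\<close>. So an invariant \<open>F\<close> is determined by
  \<open>F(0,\<cdot>)\<close>. The stabiliser of \<open>0\<close> contains the unitary Householder reflections, which act
  transitively on every sphere about \<open>0\<close>; hence \<open>F(0,v)\<close> depends only on \<open>|v|\<close> and, by
  homogeneity, equals \<open>c|v|\<close>.\<close>

lemma herm_add_left: "herm (x + y) z = herm x z + herm y z"
  by (simp add: herm_def sum.distrib distrib_right)

lemma herm_diff_left: "herm (x - y) z = herm x z - herm y z"
  by (simp add: herm_def sum_subtractf left_diff_distrib)

lemma herm_diff_right: "herm z (x - y) = herm z x - herm z y"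
  by (simp add: herm_def sum_subtractf right_diff_distrib)

lemma herm_minus_left: "herm (- x) z = - herm x z"
  by (simp add: herm_def sum_negf)

lemma herm_minus_right: "herm z (- x) = - herm z x"
  by (simp add: herm_def sum_negf)

lemma herm_smult_left: "herm (c *s x) z = c * herm x z"
  by (simp add: herm_def sum_distrib_left mult.assoc)

lemma herm_smult_right: "herm z (c *s x) = cnj c * herm z x"
  by (simp add: herm_def sum_distrib_left mult.assoc mult.left_commute)

lemma cnj_herm: "cnj (herm x y) = herm y x"
  by (simp add: herm_def mult.commute)

lemma herm_self: "herm x x = complex_of_real ((norm x)\<^sup>2)"
proof -
  have "(norm x)\<^sup>2 = (\<Sum>i\<in>UNIV. (cmod (x $ i))\<^sup>2)"
    unfolding norm_vec_def L2_set_def by (simp add: sum_nonneg)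
  then show ?thesis
    unfolding herm_def by (simp only: of_real_sum complex_norm_square)
qed

lemma norm_herm_le: "cmod (herm x y) \<le> norm x * norm y"
proof -
  have "cmod (herm x y) \<le> (\<Sum>i\<in>UNIV. cmod (x $ i) * cmod (y $ i))"
    unfolding herm_def by (rule order_trans[OF norm_sum]) (simp add: norm_mult)
  also have "\<dots> \<le> L2_set (\<lambda>i. cmod (x $ i)) UNIV * L2_set (\<lambda>i. cmod (y $ i)) UNIV"
    using L2_set_mult_ineq[of "\<lambda>i. cmod (x $ i)" "\<lambda>i. cmod (y $ i)" UNIV] by simp
  finally show ?thesis by (simp add: norm_vec_def)
qed

lemma norm_vec_smult: "norm ((c::complex) *s (v::complex^'n)) = cmod c * norm v"
  unfolding norm_vec_def by (simp add: norm_mult L2_set_right_distrib)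

lemma scaleR_eq_vec_smult: "r *\<^sub>R (x::complex^'n) = complex_of_real r *s x"
  by (simp add: vec_eq_iff scaleR_conv_of_real[where 'a=complex])

lemma bounded_bilinear_vec_smult: "bounded_bilinear (\<lambda>(c::complex) (v::complex^'n). c *s v)"
  by (rule bounded_bilinear.intro)
    (auto simp: vec_eq_iff algebra_simps norm_vec_smult intro: exI[of _ 1])

lemmas has_derivative_vec_smult[derivative_intros] =
  bounded_bilinear.FDERIV[OF bounded_bilinear_vec_smult]

lemma bounded_linear_herm_left: "bounded_linear (\<lambda>x. herm x a)"
  by (rule bounded_linear_intro[where K="norm a"])
    (auto simp: herm_add_left scaleR_eq_vec_smult herm_smult_left scaleR_conv_of_real norm_herm_le)

lemmas has_derivative_herm_left[derivative_intros] =
  bounded_linear.has_derivative[OF bounded_linear_herm_left]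

lemma unit_ball_eq_ball: "unit_ball = ball (0::complex^'n) 1"
  unfolding unit_ball_def ball_def by (auto simp: dist_norm power_less_one_iff)

lemma open_unit_ball: "open unit_ball"
  unfolding unit_ball_eq_ball by simp

lemma zero_in_unit_ball: "0 \<in> unit_ball"
  unfolding unit_ball_def by simp

lemma herm_neq_one:
  assumes "x \<in> unit_ball" "a \<in> unit_ball"
  shows "herm x a \<noteq> 1"
proof -
  have "norm x < 1" "norm a < 1"
    using assms unfolding unit_ball_eq_ball by auto
  then have "norm x * norm a < 1"
    by (meson le_less_trans less_imp_le mult_left_le norm_ge_zero)
  then have "cmod (herm x a) < 1"
    using norm_herm_le le_less_trans by blast
  then show ?thesis by auto
qed

lemma involution_in_aut_ball:
  fixes f :: "complex^'n \<Rightarrow> complex^'n"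
  assumes inv: "\<And>x. x \<in> unit_ball \<Longrightarrow> f x \<in> unit_ball \<and> f (f x) = x"
    and der: "\<And>z. z \<in> unit_ball \<Longrightarrow>
               (f has_derivative L z) (at z) \<and> (\<forall>c v. L z (c *s v) = c *s L z v)"
  shows "f \<in> aut_ball"
proof -
  have bij: "bij_betw f unit_ball unit_ball"
    by (rule bij_betw_byWitness[where f'=f]) (auto simp: inv)
  have inv_into_eq: "inv_into unit_ball f y = f y" if "y \<in> unit_ball" for y
    using bij inv[OF that] by (auto simp: bij_betw_def inv_into_f_eq)
  have "holo_on f unit_ball"
    unfolding holo_on_def using der by blast
  moreover have "holo_on (inv_into unit_ball f) unit_ball"
    unfolding holo_on_def
  proof
    fix z :: "complex^'n" assume z: "z \<in> unit_ball"
    have "(inv_into unit_ball f has_derivative L z) (at z)"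
      using der[OF z] z open_unit_ball inv_into_eq
      by (auto intro: has_derivative_transform_within_open[where f=f and s=unit_ball])
    then show "\<exists>L. (inv_into unit_ball f has_derivative L) (at z) \<and> (\<forall>c v. L (c *s v) = c *s L v)"
      using der[OF z] by blast
  qed
  ultimately show ?thesis
    unfolding aut_ball_def using bij by blast
qed

lemma spc_finsler_abs_homogeneous:
  assumes "spc_finsler F" "z \<in> unit_ball"
  shows "F z (c *s v) = cmod c * F z v"
proof -
  have "(F z (c *s v))\<^sup>2 = (cmod c * F z v)\<^sup>2" "F z (c *s v) \<ge> 0" "F z v \<ge> 0"
    using assms unfolding spc_finsler_def by (auto simp: power_mult_distrib)
  then show ?thesis by (simp add: power2_eq_iff_nonneg)
qed

section \<open>Householder reflections\<close>

definition householder :: "complex^'n \<Rightarrow> complex^'n \<Rightarrow> complex^'n" where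
  "householder u x = x - (herm x u * complex_of_real (2 / (norm u)\<^sup>2)) *s u"

lemma householder_smult: "householder u (c *s x) = c *s householder u x"
  unfolding householder_def by (simp add: vec_eq_iff herm_smult_left algebra_simps)

lemma householder_zero: "householder u 0 = 0"
  by (simp add: householder_def herm_def)

lemma has_derivative_householder: "(householder u has_derivative householder u) (at z)"
  unfolding householder_def[abs_def] by (rule derivative_eq_intros refl)+ simp

lemma herm_householder:
  assumes "u \<noteq> 0"
  shows "herm (householder u x) u = - herm x u"
proof -
  have "complex_of_real (2 / (norm u)\<^sup>2) * herm u u = 2"
    using assms by (simp add: herm_self)
  then show ?thesis
    unfolding householder_def herm_diff_left herm_smult_left by (simp only: mult.assoc) simp
qed

lemma householder_involution:
  assumes "u \<noteq> 0"
  shows "householder u (householder u x) = x"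
  using herm_householder[OF assms]
  by (simp add: householder_def[of u "householder u x"]) (simp add: householder_def vec_eq_iff)

lemma norm_householder:
  assumes "u \<noteq> 0"
  shows "norm (householder u x) = norm x"
proof -
  define k where "k = complex_of_real (2 / (norm u)\<^sup>2)"
  define p where "p = herm x u"
  have ku: "k * herm u u = 2"
    unfolding k_def using assms by (simp add: herm_self)
  have ck: "cnj k = k"
    unfolding k_def by simp
  have pu: "herm u x = cnj p"
    unfolding p_def by (simp add: cnj_herm)
  have "herm (householder u x) (householder u x)
      = herm x x - cnj (p * k) * herm x u - (p * k * herm u x - p * k * cnj (p * k) * herm u u)"
    unfolding householder_def k_def[symmetric] p_def[symmetric]
      herm_diff_left herm_diff_right herm_smult_left herm_smult_right
    by (simp add: algebra_simps)
  also have "\<dots> = herm x x + p * cnj p * k * (k * herm u u - 2)"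
    unfolding complex_cnj_mult ck pu p_def[symmetric] by algebra
  also have "\<dots> = herm x x"
    unfolding ku by simp
  finally have "(norm (householder u x))\<^sup>2 = (norm x)\<^sup>2"
    unfolding herm_self of_real_eq_iff .
  then show ?thesis by (simp add: power2_eq_iff_nonneg)
qed

lemma householder_in_aut_ball:
  assumes "u \<noteq> 0"
  shows "householder u \<in> aut_ball"
  by (rule involution_in_aut_ball[where L="\<lambda>z. householder u"])
    (auto simp: assms householder_involution norm_householder has_derivative_householder
      householder_smult unit_ball_def)

lemma householder_swap:
  assumes "norm v = norm w" "herm v w = complex_of_real r" "v \<noteq> w"
  shows "householder (v - w) v = w"
proof -
  define u where "u = v - w"
  have "herm w v = complex_of_real r"
    using arg_cong[OF assms(2), of cnj] by (simp add: cnj_herm)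
  then have vu: "herm v u = complex_of_real ((norm v)\<^sup>2 - r)"
    and uu: "herm u u = complex_of_real (2 * ((norm v)\<^sup>2 - r))"
    unfolding u_def herm_diff_right herm_diff_left
    unfolding herm_self assms(1,2) by simp_all
  have nu: "(norm u)\<^sup>2 = 2 * ((norm v)\<^sup>2 - r)"
    using uu unfolding herm_self of_real_eq_iff .
  moreover have "u \<noteq> 0"
    using assms(3) unfolding u_def by simp
  ultimately have "((norm v)\<^sup>2 - r) * (2 / (2 * ((norm v)\<^sup>2 - r))) = 1"
    by fastforce
  then have "herm v u * complex_of_real (2 / (norm u)\<^sup>2) = 1"
    unfolding vu nu of_real_mult[symmetric] by (simp only: of_real_1)
  then show ?thesis
    unfolding householder_def u_def[symmetric] by (simp add: u_def)
qed

lemma aut_invariant_origin_norm_eq: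
  fixes F :: "complex^'n \<Rightarrow> complex^'n \<Rightarrow> real"
  assumes sf: "spc_finsler F" and ai: "aut_invariant F" and "norm v = norm w"
  shows "F 0 v = F 0 w"
proof -
  txt \<open>Homogeneity lets us turn \<open>w\<close> by a unimodular scalar until \<open>\<langle>v,w\<rangle>\<close> is real;
    then a single Householder reflection, which fixes \<open>0\<close>, carries \<open>v\<close> to it.\<close>
  define h where "h = herm v w"
  define c where "c = (if h = 0 then 1 else h / complex_of_real (cmod h))"
  define w' where "w' = c *s w"
  have c: "cmod c = 1"
    unfolding c_def by (simp add: norm_divide)
  have "herm v w' = cnj c * h"
    unfolding w'_def herm_smult_right h_def ..
  also have "\<dots> = complex_of_real (cmod h)"
    unfolding c_def using complex_norm_square[of h]
    by (auto simp: power2_eq_square field_simps)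
  finally have real_herm: "herm v w' = complex_of_real (cmod h)" .
  have "norm w' = norm v"
    unfolding w'_def norm_vec_smult c using assms(3) by simp
  have "F 0 v = F 0 w'"
  proof (cases "v = w'")
    case False
    then have "v - w' \<noteq> 0" by simp
    have "F (householder (v - w') 0) (frechet_derivative (householder (v - w')) (at 0) v) = F 0 v"
      using ai householder_in_aut_ball[OF \<open>v - w' \<noteq> 0\<close>] zero_in_unit_ball
      unfolding aut_invariant_def by blast
    moreover have "frechet_derivative (householder (v - w')) (at 0) = householder (v - w')"
      by (rule frechet_derivative_at[OF has_derivative_householder, symmetric])
    moreover have "householder (v - w') v = w'"
      using householder_swap[OF _ real_herm False] \<open>norm w' = norm v\<close> by simp
    ultimately show ?thesis
      by (simp add: householder_zero)
  qed simp
  also have "\<dots> = F 0 w"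
    unfolding w'_def spc_finsler_abs_homogeneous[OF sf zero_in_unit_ball] c by simp
  finally show ?thesis .
qed

lemma aut_invariant_at_origin:
  fixes F :: "complex^'n \<Rightarrow> complex^'n \<Rightarrow> real"
  assumes sf: "spc_finsler F" and ai: "aut_invariant F"
  obtains c where "c > 0" "\<And>v. F 0 v = c * norm v"
proof
  define e :: "complex^'n" where "e = axis undefined 1"
  have "norm e = 1"
    unfolding e_def by (simp add: norm_axis_1)
  show "F 0 v = F 0 e * norm v" for v
  proof -
    have "norm (complex_of_real (norm v) *s e) = norm v"
      by (simp add: norm_vec_smult \<open>norm e = 1\<close>)
    then have "F 0 v = F 0 (complex_of_real (norm v) *s e)"
      by (rule aut_invariant_origin_norm_eq[OF assms, symmetric])
    then show ?thesis
      unfolding spc_finsler_abs_homogeneous[OF sf zero_in_unit_ball] by simp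
  qed
  have "F 0 e \<ge> 0" "F 0 e \<noteq> 0"
    using sf zero_in_unit_ball \<open>norm e = 1\<close> unfolding spc_finsler_def by auto
  then show "F 0 e > 0" by simp
qed

section \<open>Moebius involutions\<close>

text \<open>The involution \<open>\<phi>\<^sub>a(x) = (a - P\<^sub>a x - s\<^sub>a Q\<^sub>a x) / (1 - \<langle>x,a\<rangle>)\<close> of Rudin,
  Function Theory in the Unit Ball, 2.2.1, where \<open>P\<^sub>a\<close> is the orthogonal projection onto
  \<open>\<complex>a\<close>, \<open>Q\<^sub>a = 1 - P\<^sub>a\<close> and \<open>s\<^sub>a = sqrt (1 - |a|\<^sup>2)\<close>. Since
  \<open>(1 - s\<^sub>a) / |a|\<^sup>2 = 1 / (1 + s\<^sub>a)\<close>, the formula below needs no case distinction at \<open>a = 0\<close>.\<close>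

definition sa :: "complex^'n \<Rightarrow> real" where
  "sa a = sqrt (1 - (norm a)\<^sup>2)"

definition mobius :: "complex^'n \<Rightarrow> complex^'n \<Rightarrow> complex^'n" where
  "mobius a x = inverse (1 - herm x a) *s
     (a - complex_of_real (sa a) *s x - (herm x a * inverse (1 + complex_of_real (sa a))) *s a)"

definition mobius_deriv :: "complex^'n \<Rightarrow> complex^'n \<Rightarrow> complex^'n \<Rightarrow> complex^'n" where
  "mobius_deriv a z v = inverse (1 - herm z a) *s
     (herm v a *s mobius a z - complex_of_real (sa a) *s v
      - (herm v a * inverse (1 + complex_of_real (sa a))) *s a)"

lemma mobius_nth:
  "mobius a x $ i = inverse (1 - herm x a) *
     (a $ i - complex_of_real (sa a) * x $ i - herm x a * inverse (1 + complex_of_real (sa a)) * a $ i)"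
  unfolding mobius_def by (simp add: algebra_simps)

lemma mobius_deriv_smult: "mobius_deriv a z (c *s v) = c *s mobius_deriv a z v"
  unfolding mobius_deriv_def by (simp add: vec_eq_iff herm_smult_left algebra_simps)

context
  fixes a :: "complex^'n"
  assumes a_in_ball: "a \<in> unit_ball"
begin

lemma sa_pos: "0 < sa a"
  using a_in_ball unfolding unit_ball_def sa_def by simp

lemma sa_power2: "(sa a)\<^sup>2 = 1 - (norm a)\<^sup>2"
  using a_in_ball unfolding unit_ball_def sa_def by simp

lemma herm_self_center: "herm a a = 1 - complex_of_real (sa a) ^ 2"
  unfolding herm_self by (simp add: sa_power2 flip: of_real_power)

lemma inverse_one_plus_sa: "inverse (1 + complex_of_real (sa a)) * (1 + complex_of_real (sa a)) = 1"
proof -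
  have "0 < Re (1 + complex_of_real (sa a))"
    using sa_pos by simp
  then have "1 + complex_of_real (sa a) \<noteq> 0"
    by (metis zero_complex.sel(1) less_irrefl)
  then show ?thesis
    by (rule left_inverse)
qed

lemma herm_mobius_center:
  assumes "x \<in> unit_ball"
  shows "herm (mobius a x) a = inverse (1 - herm x a) * (herm a a - herm x a)"
proof -
  define S where "S = complex_of_real (sa a)"
  define p where "p = herm x a"
  define e where "e = inverse (1 + S)"
  have e: "e * (1 + S) = 1"
    unfolding e_def S_def by (rule inverse_one_plus_sa)
  have "herm (mobius a x) a = inverse (1 - p) * (herm a a - S * p - p * e * herm a a)"
    unfolding mobius_def p_def S_def e_def herm_smult_left herm_diff_left
    by (simp add: algebra_simps)
  also have "\<dots> = inverse (1 - p) * (herm a a - p)"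
    using e unfolding herm_self_center S_def[symmetric] by algebra
  finally show ?thesis
    unfolding p_def .
qed

lemma mobius_involution:
  assumes "x \<in> unit_ball"
  shows "mobius a (mobius a x) = x"
proof -
  define S where "S = complex_of_real (sa a)"
  define p where "p = herm x a"
  define e where "e = inverse (1 + S)"
  define d where "d = inverse (1 - p)"
  have e: "e * (1 + S) = 1"
    unfolding e_def S_def by (rule inverse_one_plus_sa)
  have d: "d * (1 - p) = 1"
    unfolding d_def p_def using herm_neq_one[OF assms a_in_ball] by simp
  have "S \<noteq> 0" "d \<noteq> 0"
    using sa_pos d unfolding S_def by auto
  have herm_image: "herm (mobius a x) a = d * (1 - S\<^sup>2 - p)"
    using herm_mobius_center[OF assms] unfolding herm_self_center S_def p_def d_def .
  have "1 - d * (1 - S\<^sup>2 - p) = S\<^sup>2 * d"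
    using d by algebra
  then have denom: "inverse (1 - herm (mobius a x) a) = inverse (S\<^sup>2 * d)"
    unfolding herm_image by simp
  have image_nth: "mobius a x $ i = d * (a $ i - S * x $ i - p * e * a $ i)" for i
    unfolding mobius_nth S_def p_def e_def d_def ..
  show ?thesis
  proof (rule iffD2[OF vec_eq_iff], rule allI)
    fix i
    have "mobius a (mobius a x) $ i = inverse (S\<^sup>2 * d) *
      (a $ i - S * (d * (a $ i - S * x $ i - p * e * a $ i)) - (d * (1 - S\<^sup>2 - p)) * e * a $ i)"
      unfolding mobius_nth[of a "mobius a x"] denom image_nth[symmetric] herm_image[symmetric]
      unfolding S_def e_def ..
    also have "\<dots> = inverse (S\<^sup>2 * d) * (S\<^sup>2 * d * x $ i)"
      using d e by algebra
    also have "\<dots> = x $ i"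
      using \<open>S \<noteq> 0\<close> \<open>d \<noteq> 0\<close> by (simp add: field_simps)
    finally show "mobius a (mobius a x) $ i = x $ i" .
  qed
qed

lemma one_minus_norm_mobius:
  assumes "x \<in> unit_ball"
  shows "1 - (norm (mobius a x))\<^sup>2 = (1 - (norm a)\<^sup>2) * (1 - (norm x)\<^sup>2) / (cmod (1 - herm x a))\<^sup>2"
proof -
  define S where "S = complex_of_real (sa a)"
  define p where "p = herm x a"
  define e where "e = inverse (1 + S)"
  define d where "d = inverse (1 - p)"
  define b where "b = complex_of_real ((norm x)\<^sup>2)"
  have e: "e * (1 + S) = 1"
    unfolding e_def S_def by (rule inverse_one_plus_sa)
  have d: "d * (1 - p) = 1"
    unfolding d_def p_def using herm_neq_one[OF assms a_in_ball] by simp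
  have cnj_d: "cnj d * (1 - cnj p) = 1"
    using arg_cong[OF d, of cnj] by simp
  have real: "cnj S = S" "cnj e = e"
    unfolding e_def S_def by simp_all
  have herm_ax: "herm a x = cnj p"
    unfolding p_def by (simp add: cnj_herm)
  have "herm (mobius a x) (mobius a x) =
     d * cnj d * (herm a a - cnj S * herm a x - cnj (p * e) * herm a a
       - (S * herm x a - S * cnj S * herm x x - S * cnj (p * e) * herm x a)
       - (p * e * herm a a - p * e * cnj S * herm a x - p * e * cnj (p * e) * herm a a))"
    unfolding mobius_def S_def[symmetric] e_def[symmetric] p_def[symmetric] d_def[symmetric]
      herm_smult_left herm_smult_right herm_diff_left herm_diff_right
    by (simp add: algebra_simps)
  also have "\<dots> = 1 - d * cnj d * S\<^sup>2 * (1 - b)"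
    unfolding herm_self_center S_def[symmetric] herm_ax real complex_cnj_mult p_def[symmetric]
      herm_self[of x] b_def[symmetric]
    using d cnj_d e by algebra
  finally have "complex_of_real ((norm (mobius a x))\<^sup>2)
      = complex_of_real (1 - (cmod d)\<^sup>2 * (sa a)\<^sup>2 * (1 - (norm x)\<^sup>2))"
    unfolding herm_self b_def S_def
    using complex_norm_square[of d] by (simp add: of_real_power)
  then have "1 - (norm (mobius a x))\<^sup>2 = (cmod d)\<^sup>2 * (sa a)\<^sup>2 * (1 - (norm x)\<^sup>2)"
    unfolding of_real_eq_iff by simp
  then show ?thesis
    unfolding d_def p_def sa_power2 norm_inverse power_inverse by (simp add: divide_inverse ac_simps)
qed

lemma mobius_in_unit_ball:
  assumes "x \<in> unit_ball"
  shows "mobius a x \<in> unit_ball"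
proof -
  have "0 < 1 - (norm a)\<^sup>2" "0 < 1 - (norm x)\<^sup>2" "0 < (cmod (1 - herm x a))\<^sup>2"
    using a_in_ball assms herm_neq_one[OF assms a_in_ball] unfolding unit_ball_def by auto
  then have "0 < 1 - (norm (mobius a x))\<^sup>2"
    unfolding one_minus_norm_mobius[OF assms] by simp
  then show ?thesis
    unfolding unit_ball_def by simp
qed

lemma mobius_center: "mobius a a = 0"
proof -
  define S where "S = complex_of_real (sa a)"
  define e where "e = inverse (1 + S)"
  have "e * (1 + S) = 1"
    unfolding e_def S_def by (rule inverse_one_plus_sa)
  then have "1 - S - (1 - S\<^sup>2) * e = 0"
    by algebra
  then have "a $ i - S * a $ i - (1 - S\<^sup>2) * e * a $ i = 0" for i
    by (metis left_diff_distrib mult_1 mult_zero_left)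
  then show ?thesis
    unfolding vec_eq_iff mobius_nth herm_self_center S_def[symmetric] e_def[symmetric] by simp
qed

lemma has_derivative_mobius:
  assumes "z \<in> unit_ball"
  shows "(mobius a has_derivative mobius_deriv a z) (at z)"
proof -
  define S where "S = complex_of_real (sa a)"
  define e where "e = inverse (1 + S)"
  define d where "d = inverse (1 - herm z a)"
  have "herm z a \<noteq> 1"
    using herm_neq_one[OF assms a_in_ball] .
  then have "((\<lambda>x. inverse (1 - herm x a)) has_derivative (\<lambda>h. d * herm h a * d)) (at z)"
    unfolding d_def by (auto intro!: derivative_eq_intros)
  moreover have "((\<lambda>x. a - S *s x - (herm x a * e) *s a) has_derivative
      (\<lambda>h. - (S *s h) - (herm h a * e) *s a)) (at z)"
    by (auto intro!: derivative_eq_intros)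
  ultimately have "(mobius a has_derivative (\<lambda>h. d *s (- (S *s h) - (herm h a * e) *s a)
      + (d * herm h a * d) *s (a - S *s z - (herm z a * e) *s a))) (at z)"
    unfolding mobius_def[abs_def] S_def e_def d_def by (rule has_derivative_vec_smult)
  then show ?thesis
    unfolding mobius_deriv_def[abs_def] mobius_def S_def[symmetric] e_def[symmetric] d_def[symmetric]
    by (simp add: vec_eq_iff algebra_simps)
qed

lemma mobius_in_aut_ball: "mobius a \<in> aut_ball"
  by (rule involution_in_aut_ball[where L="mobius_deriv a"])
    (auto simp: mobius_in_unit_ball mobius_involution has_derivative_mobius mobius_deriv_smult)

lemma frechet_derivative_mobius_center: "frechet_derivative (mobius a) (at a) = mobius_deriv a a"
  by (rule frechet_derivative_at[OF has_derivative_mobius[OF a_in_ball], symmetric])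

lemma norm_mobius_deriv_center:
  "(norm (mobius_deriv a a v))\<^sup>2
     = ((1 - (norm a)\<^sup>2) * (norm v)\<^sup>2 + (cmod (herm a v))\<^sup>2) / (1 - (norm a)\<^sup>2)\<^sup>2"
proof -
  define S where "S = complex_of_real (sa a)"
  define e where "e = inverse (1 + S)"
  define k where "k = inverse (S\<^sup>2)"
  define q where "q = herm v a"
  have e: "e * (1 + S) = 1"
    unfolding e_def S_def by (rule inverse_one_plus_sa)
  have real: "cnj S = S" "cnj e = e" "cnj k = k"
    unfolding k_def e_def S_def by simp_all
  have herm_av: "herm a v = cnj q"
    unfolding q_def by (simp add: cnj_herm)
  have norm_q: "q * cnj q = complex_of_real ((cmod (herm a v))\<^sup>2)"
    unfolding herm_av complex_norm_square by simp
  have deriv: "mobius_deriv a a v = k *s (- (S *s v) - (q * e) *s a)"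
    unfolding mobius_deriv_def mobius_center herm_self_center k_def S_def e_def q_def
    by (simp add: vec_eq_iff algebra_simps)
  have "herm (mobius_deriv a a v) (mobius_deriv a a v) = k * cnj k * (S * cnj S * herm v v
      + S * cnj (q * e) * herm v a + q * e * cnj S * herm a v + q * e * cnj (q * e) * herm a a)"
    unfolding deriv by (simp add: herm_smult_left herm_smult_right herm_diff_left herm_diff_right
        herm_minus_left herm_minus_right algebra_simps)
  also have "\<dots> = k * k * (S\<^sup>2 * herm v v + q * cnj q * (2 * S * e + e * e * (1 - S\<^sup>2)))"
    unfolding real herm_av complex_cnj_mult herm_self_center S_def[symmetric] q_def[symmetric]
    by algebra
  also have "2 * S * e + e * e * (1 - S\<^sup>2) = 1"
    using e by algebra
  finally have "complex_of_real ((norm (mobius_deriv a a v))\<^sup>2) = complex_of_real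
      (inverse ((sa a)\<^sup>2) * inverse ((sa a)\<^sup>2) * ((sa a)\<^sup>2 * (norm v)\<^sup>2 + (cmod (herm a v))\<^sup>2))"
    unfolding norm_q herm_self k_def S_def by simp
  then show ?thesis
    unfolding of_real_eq_iff sa_power2 by (simp add: field_simps power2_eq_square)
qed

end

theorem theorem1p2:
  fixes F :: "complex ^ 'n \<Rightarrow> complex ^ 'n \<Rightarrow> real"
  assumes "spc_finsler F"
    and "aut_invariant F"
  shows "\<exists>c>0. \<forall>z\<in>unit_ball. \<forall>v.
           (F z v)^2 = c * ((1 - (norm z)^2) * (norm v)^2 + (cmod (herm z v))^2)
                         / (1 - (norm z)^2)^2"
proof -
  obtain c where "c > 0" and F_origin: "\<And>v. F 0 v = c * norm v"
    using aut_invariant_at_origin[OF assms] by blast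
  have F_eq: "F z v = c * norm (mobius_deriv z z v)" if z: "z \<in> unit_ball" for z v
  proof -
    have "F z v = F (mobius z z) (frechet_derivative (mobius z) (at z) v)"
      using assms(2) mobius_in_aut_ball[OF z] z unfolding aut_invariant_def by metis
    then show ?thesis
      unfolding mobius_center[OF z] frechet_derivative_mobius_center[OF z] F_origin .
  qed
  show ?thesis
    using \<open>c > 0\<close>
    by (intro exI[of _ "c\<^sup>2"]) (simp add: F_eq norm_mobius_deriv_center power_mult_distrib)
qed

end
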